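(* Let $D$ be an integral domain with quotient field $K$. The map $\mathcal F\mapsto\boldsymbol{\mathcal S}(\mathcal F):=D[X]\setminus\bigcup\{Q[X]\mid Q\in\mathrm{Spec}(D),\ Q\notin\mathcal F\}$ is a bijection between the set of localizing systems of finite type on $D$ and the set of extended saturated multiplicative subsets of $D[X]$. Moreover, for every localizing system of finite type $\mathcal F$ and every $E\in\overline{\boldsymbol F}(D)$, $E_{\mathcal F}=E\cdot D[X]_{\boldsymbol{\mathcal S}(\mathcal F)}\cap K$.
   Context: $\overline{\boldsymbol F}(D)$ is the set of nonzero $D$-submodules of $K$. A localizing system of ideals of $D$ is a nonempty set $\mathcal F$ of ideals of $D$ with $(0)\notin\mathcal F$ such that: if $I\in\mathcal F$ and $I\subseteq J$ ($J$ an ideal) then $J\in\mathcal F$; and if $I\in\mathcal F$ and $J$ is an ideal with $(J:_D iD)\in\mathcal F$ for every $i\in I$, then $J\in\mathcal F$. It is of finite type if every $I\in\mathcal F$ contains a finitely generated $J\in\mathcal F$. For $E\in\overline{\boldsymbol F}(D)$, $E_{\mathcal F}=\bigcup\{(E:I)\mid I\in\mathcal F\}=\{z\in K\mid (E:_D zD)\in\mathcal F\}$. For a multiplicative set $\mathcal S\subseteq D[X]$, its extended saturation is $\mathcal S^\sharp=D[X]\setminus\bigcup\{P[X]\mid P\in\mathrm{Spec}(D),\ P[X]\cap\mathcal S=\emptyset\}$, and $\mathcal S$ is extended saturated if $\mathcal S=\mathcal S^\sharp$. *)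

theory Defs
  imports "HOL-Computational_Algebra.Polynomial" "HOL-Computational_Algebra.Fraction_Field"
begin

text \<open>Convention: the quotient field K is a type 'k of class field; the integral
domain D is a subring of K (given as a set) whose quotient field is K.\<close>

definition subring_of :: "'k::field set \<Rightarrow> bool" where
  "subring_of D \<longleftrightarrow> 0 \<in> D \<and> 1 \<in> D \<and> (\<forall>a\<in>D. \<forall>b\<in>D. a + b \<in> D \<and> a - b \<in> D \<and> a * b \<in> D)"

definition quotient_field_of :: "'k::field set \<Rightarrow> bool" where
  "quotient_field_of D \<longleftrightarrow> (\<forall>z. \<exists>a\<in>D. \<exists>b\<in>D. b \<noteq> 0 \<and> z = a / b)"

definition submodule_of :: "'k::field set \<Rightarrow> 'k set \<Rightarrow> bool" where
  "submodule_of D E \<longleftrightarrow> 0 \<in> E \<and> (\<forall>x\<in>E. \<forall>y\<in>E. x + y \<in> E) \<and> (\<forall>d\<in>D. \<forall>x\<in>E. d * x \<in> E)"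

definition Fbar :: "'k::field set \<Rightarrow> 'k set \<Rightarrow> bool" where
  "Fbar D E \<longleftrightarrow> submodule_of D E \<and> E \<noteq> {0}"

definition ideal_of :: "'k::field set \<Rightarrow> 'k set \<Rightarrow> bool" where
  "ideal_of D I \<longleftrightarrow> I \<subseteq> D \<and> submodule_of D I"

definition prime_ideal_of :: "'k::field set \<Rightarrow> 'k set \<Rightarrow> bool" where
  "prime_ideal_of D P \<longleftrightarrow> ideal_of D P \<and> P \<noteq> D \<and>
     (\<forall>a\<in>D. \<forall>b\<in>D. a * b \<in> P \<longrightarrow> a \<in> P \<or> b \<in> P)"

definition Spec :: "'k::field set \<Rightarrow> 'k set set" where
  "Spec D = {P. prime_ideal_of D P}"

definition colon_D :: "'k::field set \<Rightarrow> 'k set \<Rightarrow> 'k \<Rightarrow> 'k set" where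
  "colon_D D J i = {d \<in> D. d * i \<in> J}"

definition colon :: "'k::field set \<Rightarrow> 'k set \<Rightarrow> 'k set" where
  "colon E I = {z. \<forall>i\<in>I. z * i \<in> E}"

definition localizing_system :: "'k::field set \<Rightarrow> 'k set set \<Rightarrow> bool" where
  "localizing_system D F \<longleftrightarrow>
     F \<noteq> {} \<and> (\<forall>I\<in>F. ideal_of D I) \<and> {0} \<notin> F \<and>
     (\<forall>I\<in>F. \<forall>J. ideal_of D J \<and> I \<subseteq> J \<longrightarrow> J \<in> F) \<and>
     (\<forall>I\<in>F. \<forall>J. ideal_of D J \<and> (\<forall>i\<in>I. colon_D D J i \<in> F) \<longrightarrow> J \<in> F)"

definition ideal_gen :: "'k::field set \<Rightarrow> 'k set \<Rightarrow> 'k set" where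
  "ideal_gen D G = {\<Sum>g\<in>G. a g * g | a. \<forall>g\<in>G. a g \<in> D}"

definition finitely_generated_ideal :: "'k::field set \<Rightarrow> 'k set \<Rightarrow> bool" where
  "finitely_generated_ideal D J \<longleftrightarrow> (\<exists>G. finite G \<and> G \<subseteq> D \<and> J = ideal_gen D G)"

definition loc_sys_finite_type :: "'k::field set \<Rightarrow> 'k set set \<Rightarrow> bool" where
  "loc_sys_finite_type D F \<longleftrightarrow> localizing_system D F \<and>
     (\<forall>I\<in>F. \<exists>J\<in>F. J \<subseteq> I \<and> finitely_generated_ideal D J)"

definition E_loc :: "'k::field set set \<Rightarrow> 'k set \<Rightarrow> 'k set" where
  "E_loc F E = \<Union>{colon E I | I. I \<in> F}"

text \<open>A[X] for a subset A of K: polynomials over K with all coefficients in A.\<close>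
definition polys_over :: "'k::field set \<Rightarrow> 'k poly set" where
  "polys_over A = {p. \<forall>n. coeff p n \<in> A}"

definition mult_subset :: "'k::field set \<Rightarrow> 'k poly set \<Rightarrow> bool" where
  "mult_subset D S \<longleftrightarrow> S \<subseteq> polys_over D \<and> 1 \<in> S \<and> 0 \<notin> S \<and>
     (\<forall>s\<in>S. \<forall>t\<in>S. s * t \<in> S)"

definition ext_saturation :: "'k::field set \<Rightarrow> 'k poly set \<Rightarrow> 'k poly set" where
  "ext_saturation D S = polys_over D -
     \<Union>{polys_over P | P. P \<in> Spec D \<and> polys_over P \<inter> S = {}}"

definition ext_saturated :: "'k::field set \<Rightarrow> 'k poly set \<Rightarrow> bool" where
  "ext_saturated D S \<longleftrightarrow> S = ext_saturation D S"

definition S_of :: "'k::field set \<Rightarrow> 'k set set \<Rightarrow> 'k poly set" where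
  "S_of D F = polys_over D - \<Union>{polys_over Q | Q. Q \<in> Spec D \<and> Q \<notin> F}"

text \<open>D[X]_S as a subring of K(X) = fraction field of K[X].\<close>
definition loc_ring :: "'k::field set \<Rightarrow> 'k poly set \<Rightarrow> 'k poly fract set" where
  "loc_ring D S = {Fract f s | f s. f \<in> polys_over D \<and> s \<in> S}"

text \<open>E \<cdot> D[X]_S: the D[X]_S-submodule of K(X) generated by E (finite sums).\<close>
definition ext_module :: "'k::field set \<Rightarrow> 'k set \<Rightarrow> 'k poly set \<Rightarrow> 'k poly fract set" where
  "ext_module D E S = {\<Sum>i<n. Fract [:e i:] 1 * r i | (n::nat) e r.
      \<forall>i<n. e i \<in> E \<and> r i \<in> loc_ring D S}"

text \<open>Intersection with K, K embedded in K(X) as constants.\<close>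
definition inter_K :: "'k::field poly fract set \<Rightarrow> 'k set" where
  "inter_K A = {z. Fract [:z:] 1 \<in> A}"

end

theory Submission imports Defs begin

(*
  For s in D[X] let cont D s, the content of s, be the ideal of D generated by its
  coefficients; cont D s is contained in an ideal J iff s lies in J[X], and every
  finitely generated ideal is a content.  Two facts carry the argument:
  (1) for a prime Q of D, Q[X] is prime in D[X] (compare lowest coefficients not in Q);
  (2) if F is a localizing system of finite type and I is an ideal not in F, then some
      prime Q not in F contains I: by Zorn and finite type the ideals above I outside F
      have a maximal element, and such an ideal is prime.
  By (2), S(F) = {s in D[X]. cont D s in F}, so F is recovered from S(F) through the
  inverse map F_of S = {I. cont D s \<subseteq> I for some s in S}; this gives injectivity.
  For every S \<subseteq> D[X] one has S(F_of S) = S^#, which shows that S(F) is extended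
  saturated and, for extended saturated multiplicative S, that S is hit.  Finally
  E \<cdot> D[X]_S consists of the fractions h/t with h in E[X], t in S, so z lies in it
  iff z t in E[X] for some t in S(F), i.e. iff z cont D t \<subseteq> E with cont D t in F.
*)

text \<open>Submodules are closed under arbitrary finite sums (an infinite sum is 0).\<close>
lemma submodule_sum:
  assumes "submodule_of D A" "\<And>x. x \<in> S \<Longrightarrow> f x \<in> A"
  shows "sum f S \<in> A"
  using assms(2)
proof (induction S rule: infinite_finite_induct)
  case (infinite S) then show ?case using assms(1) by (simp add: submodule_of_def)
next
  case empty then show ?case using assms(1) by (simp add: submodule_of_def)
next
  case (insert x S) then show ?case using assms(1) by (simp add: submodule_of_def)
qed

lemma ideal_ofI:
  assumes "J \<subseteq> D" "0 \<in> J" "\<And>x y. x \<in> J \<Longrightarrow> y \<in> J \<Longrightarrow> x + y \<in> J"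
    and "\<And>d x. d \<in> D \<Longrightarrow> x \<in> J \<Longrightarrow> d * x \<in> J"
  shows "ideal_of D J"
  using assms by (simp add: ideal_of_def submodule_of_def)

lemma ideal_of_D: "subring_of D \<Longrightarrow> ideal_of D D"
  by (simp add: ideal_of_def subring_of_def submodule_of_def)

lemma ideal_subset: "ideal_of D J \<Longrightarrow> J \<subseteq> D"
  by (simp add: ideal_of_def)

lemma ideal_submodule: "ideal_of D J \<Longrightarrow> submodule_of D J"
  by (simp add: ideal_of_def)

lemma ideal_zero: "ideal_of D J \<Longrightarrow> 0 \<in> J"
  by (simp add: ideal_of_def submodule_of_def)

lemma ideal_add: "ideal_of D J \<Longrightarrow> x \<in> J \<Longrightarrow> y \<in> J \<Longrightarrow> x + y \<in> J"
  by (simp add: ideal_of_def submodule_of_def)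

lemma ideal_mult_left: "ideal_of D J \<Longrightarrow> d \<in> D \<Longrightarrow> x \<in> J \<Longrightarrow> d * x \<in> J"
  by (simp add: ideal_of_def submodule_of_def)

lemma ideal_mult_right: "ideal_of D J \<Longrightarrow> d \<in> D \<Longrightarrow> x \<in> J \<Longrightarrow> x * d \<in> J"
  by (simp add: ideal_mult_left mult.commute)

lemma ideal_diff:
  assumes "subring_of D" "ideal_of D J" "x \<in> J" "y \<in> J"
  shows "x - y \<in> J"
proof -
  have "-1 \<in> D" using assms(1) unfolding subring_of_def by (metis diff_0)
  then have "x + (-1 * y) \<in> J"
    using ideal_add[OF assms(2,3)] ideal_mult_left[OF assms(2) _ assms(4)] by blast
  then show ?thesis by simp
qed

lemma one_notin_prime:
  assumes "prime_ideal_of D Q" shows "1 \<notin> Q"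
proof
  assume one: "1 \<in> Q"
  have QI: "ideal_of D Q" using assms by (simp add: prime_ideal_of_def)
  have "d \<in> Q" if "d \<in> D" for d using ideal_mult_right[OF QI that one] by simp
  then have "Q = D" using ideal_subset[OF QI] by blast
  then show False using assms by (simp add: prime_ideal_of_def)
qed

lemma colon_D_ideal:
  assumes "subring_of D" "submodule_of D E"
  shows "ideal_of D (colon_D D E z)"
  using assms
  by (auto simp: ideal_of_def submodule_of_def subring_of_def colon_D_def
      distrib_right mult.assoc)

lemma polys_over_add:
  "submodule_of D A \<Longrightarrow> p \<in> polys_over A \<Longrightarrow> q \<in> polys_over A \<Longrightarrow> p + q \<in> polys_over A"
  by (simp add: polys_over_def submodule_of_def)

lemma polys_over_mult:
  assumes A: "submodule_of D A" and p: "p \<in> polys_over A" and q: "q \<in> polys_over D"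
  shows "p * q \<in> polys_over A"
proof -
  have "coeff q (n - i) * coeff p i \<in> A" for n i
    using A p q by (simp add: submodule_of_def polys_over_def)
  then have "coeff (p * q) n \<in> A" for n
    unfolding coeff_mult by (intro submodule_sum[OF A]) (simp add: mult.commute)
  then show ?thesis by (simp add: polys_over_def)
qed

lemma one_polys_over: "subring_of D \<Longrightarrow> 1 \<in> polys_over D"
  by (simp add: polys_over_def subring_of_def)

lemma monom_polys_over: "subring_of D \<Longrightarrow> monom 1 k \<in> polys_over D"
  by (simp add: polys_over_def subring_of_def)

lemma const_polys_over: "submodule_of D E \<Longrightarrow> c \<in> E \<Longrightarrow> [:c:] \<in> polys_over E"
  by (auto simp: polys_over_def submodule_of_def coeff_pCons split: nat.split)

lemma prod_polys_over:
  assumes "subring_of D" "\<And>k. k \<in> A \<Longrightarrow> t k \<in> polys_over D"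
  shows "prod t A \<in> polys_over D"
  using assms(2)
proof (induction A rule: infinite_finite_induct)
  case (insert x A)
  then show ?case
    using polys_over_mult[of D D] assms(1) by (simp add: ideal_submodule ideal_of_D)
qed (use one_polys_over[OF assms(1)] in simp_all)

text \<open>If f, g are not in Q[X], the product of their lowest coefficients outside Q is,
  modulo Q, the coefficient of f g in the corresponding degree.\<close>
lemma prime_polys_over:
  assumes D: "subring_of D" and Q: "prime_ideal_of D Q"
    and f: "f \<in> polys_over D" and g: "g \<in> polys_over D" and fg: "f * g \<in> polys_over Q"
  shows "f \<in> polys_over Q \<or> g \<in> polys_over Q"
proof (rule ccontr)
  assume "\<not> ?thesis"
  then have ex_f: "\<exists>i. coeff f i \<notin> Q" and ex_g: "\<exists>j. coeff g j \<notin> Q"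
    by (auto simp: polys_over_def)
  define i where "i = (LEAST i. coeff f i \<notin> Q)"
  define j where "j = (LEAST j. coeff g j \<notin> Q)"
  have fi: "coeff f i \<notin> Q" unfolding i_def by (rule LeastI_ex[OF ex_f])
  have gj: "coeff g j \<notin> Q" unfolding j_def by (rule LeastI_ex[OF ex_g])
  have below_i: "coeff f a \<in> Q" if "a < i" for a
    using not_less_Least[of a "\<lambda>i. coeff f i \<notin> Q"] that i_def by blast
  have below_j: "coeff g b \<in> Q" if "b < j" for b
    using not_less_Least[of b "\<lambda>i. coeff g i \<notin> Q"] that j_def by blast
  have QI: "ideal_of D Q" using Q by (simp add: prime_ideal_of_def)
  have split: "coeff (f * g) (i + j)
      = coeff f i * coeff g j + (\<Sum>a\<in>{..i+j}-{i}. coeff f a * coeff g (i + j - a))"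
    unfolding coeff_mult by (subst sum.remove[of _ i]) auto
  have rest: "(\<Sum>a\<in>{..i+j}-{i}. coeff f a * coeff g (i + j - a)) \<in> Q"
  proof (rule submodule_sum[OF ideal_submodule[OF QI]])
    fix a assume a: "a \<in> {..i+j}-{i}"
    show "coeff f a * coeff g (i + j - a) \<in> Q"
    proof (cases "a < i")
      case True
      then show ?thesis using below_i g ideal_mult_right[OF QI] by (auto simp: polys_over_def)
    next
      case False
      then have "i + j - a < j" using a by auto
      then show ?thesis using below_j f ideal_mult_left[OF QI] by (auto simp: polys_over_def)
    qed
  qed
  have "coeff (f * g) (i + j) \<in> Q" using fg by (simp add: polys_over_def)
  with rest have "coeff (f * g) (i + j) - (\<Sum>a\<in>{..i+j}-{i}. coeff f a * coeff g (i + j - a)) \<in> Q"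
    by (intro ideal_diff[OF D QI])
  then have "coeff f i * coeff g j \<in> Q" by (simp add: split)
  moreover have "coeff f i \<in> D" "coeff g j \<in> D" using f g by (auto simp: polys_over_def)
  moreover have "\<forall>a\<in>D. \<forall>b\<in>D. a * b \<in> Q \<longrightarrow> a \<in> Q \<or> b \<in> Q"
    using Q by (simp add: prime_ideal_of_def)
  ultimately show False using fi gj by blast
qed

section \<open>Generated ideals and the content of a polynomial\<close>

lemma ideal_genI: "x = (\<Sum>g\<in>G. a g * g) \<Longrightarrow> \<forall>g\<in>G. a g \<in> D \<Longrightarrow> x \<in> ideal_gen D G"
  unfolding ideal_gen_def by blast

lemma ideal_gen_least:
  assumes "ideal_of D J" "G \<subseteq> J"
  shows "ideal_gen D G \<subseteq> J"
proof
  fix x assume "x \<in> ideal_gen D G"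
  then obtain a where x: "x = (\<Sum>g\<in>G. a g * g)" and a: "\<forall>g\<in>G. a g \<in> D"
    unfolding ideal_gen_def by blast
  show "x \<in> J" unfolding x
    using assms a by (intro submodule_sum[OF ideal_submodule]) (auto intro: ideal_mult_left)
qed

lemma ideal_gen_generators:
  assumes D: "subring_of D" and G: "finite G"
  shows "G \<subseteq> ideal_gen D G"
proof
  fix g assume g: "g \<in> G"
  have "(\<Sum>h\<in>G. (if h = g then 1 else 0) * h) = (\<Sum>h\<in>G. if h = g then h else 0)"
    by (intro sum.cong) auto
  also have "\<dots> = g" using g G by simp
  finally have "(\<Sum>h\<in>G. (if h = g then 1 else 0) * h) = g" .
  moreover have "\<forall>h\<in>G. (if h = g then 1 else 0) \<in> D" using D by (simp add: subring_of_def)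
  ultimately show "g \<in> ideal_gen D G" by (intro ideal_genI) auto
qed

lemma ideal_gen_ideal:
  assumes D: "subring_of D" and G: "G \<subseteq> D"
  shows "ideal_of D (ideal_gen D G)"
proof (rule ideal_ofI)
  show "ideal_gen D G \<subseteq> D" using ideal_gen_least[OF ideal_of_D[OF D] G] .
  show "0 \<in> ideal_gen D G"
    using D by (intro ideal_genI[where G=G and a="\<lambda>_. 0"]) (auto simp: subring_of_def)
next
  fix x y assume "x \<in> ideal_gen D G" "y \<in> ideal_gen D G"
  then obtain a b where "x = (\<Sum>g\<in>G. a g * g)" "\<forall>g\<in>G. a g \<in> D"
    and "y = (\<Sum>g\<in>G. b g * g)" "\<forall>g\<in>G. b g \<in> D"
    unfolding ideal_gen_def by blast
  then show "x + y \<in> ideal_gen D G" using D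
    by (intro ideal_genI[where G=G and a="\<lambda>g. a g + b g"])
       (auto simp: distrib_right sum.distrib subring_of_def)
next
  fix d x assume d: "d \<in> D" and "x \<in> ideal_gen D G"
  then obtain a where "x = (\<Sum>g\<in>G. a g * g)" "\<forall>g\<in>G. a g \<in> D"
    unfolding ideal_gen_def by blast
  then show "d * x \<in> ideal_gen D G" using d D
    by (intro ideal_genI[where G=G and a="\<lambda>g. d * a g"])
       (auto simp: sum_distrib_left mult.assoc subring_of_def)
qed

definition cont :: "'k::field set \<Rightarrow> 'k poly \<Rightarrow> 'k set" where
  "cont D s = ideal_gen D (range (coeff s))"

text \<open>A polynomial has finitely many coefficient values, so contents are finitely generated.\<close>
lemma finite_range_coeff: "finite (range (coeff s))"
proof -
  have "range (coeff s) \<subseteq> insert 0 (coeff s ` {..degree s})"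
    by (auto simp: image_iff) (metis atMost_iff coeff_eq_0 not_le)
  then show ?thesis by (rule finite_subset) simp
qed

lemma cont_ideal: "subring_of D \<Longrightarrow> s \<in> polys_over D \<Longrightarrow> ideal_of D (cont D s)"
  unfolding cont_def by (rule ideal_gen_ideal) (auto simp: polys_over_def)

lemma coeff_in_cont: "subring_of D \<Longrightarrow> coeff s k \<in> cont D s"
  unfolding cont_def using ideal_gen_generators[OF _ finite_range_coeff, of D s] by blast

lemma cont_subset_iff:
  "subring_of D \<Longrightarrow> ideal_of D J \<Longrightarrow> cont D s \<subseteq> J \<longleftrightarrow> s \<in> polys_over J"
  using coeff_in_cont[of D s] ideal_gen_least[of D J "range (coeff s)"]
  by (auto simp: polys_over_def cont_def)

lemma cont_finitely_generated:
  "s \<in> polys_over D \<Longrightarrow> finitely_generated_ideal D (cont D s)"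
  unfolding finitely_generated_ideal_def cont_def
  using finite_range_coeff by (auto simp: polys_over_def)

text \<open>Conversely every finitely generated ideal is the content of a polynomial: take
  the polynomial whose coefficients list the generators.\<close>
lemma finitely_generated_is_cont:
  assumes D: "subring_of D" and J: "finitely_generated_ideal D J"
  shows "\<exists>s\<in>polys_over D. cont D s = J"
proof -
  obtain G where G: "finite G" "G \<subseteq> D" "J = ideal_gen D G"
    using J unfolding finitely_generated_ideal_def by blast
  obtain xs where xs: "set xs = G" using finite_list[OF G(1)] by blast
  define s where "s = Poly xs"
  have coeffs: "range (coeff s) \<subseteq> insert 0 G"
  proof
    fix y assume "y \<in> range (coeff s)"
    then obtain n where "y = coeff s n" by auto
    then show "y \<in> insert 0 G"
      using xs by (cases "n < length xs") (auto simp: s_def nth_default_def)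
  qed
  have gens: "G \<subseteq> range (coeff s)"
  proof
    fix g assume "g \<in> G"
    then obtain n where "n < length xs" "xs ! n = g" using xs by (auto simp: in_set_conv_nth)
    then show "g \<in> range (coeff s)" by (metis s_def coeff_Poly_eq nth_default_nth rangeI)
  qed
  have "insert 0 G \<subseteq> D" using G(2) D by (simp add: subring_of_def)
  then have sD: "s \<in> polys_over D" using coeffs unfolding polys_over_def by blast
  have GI: "ideal_of D (ideal_gen D G)" using ideal_gen_ideal[OF D G(2)] .
  have "insert 0 G \<subseteq> ideal_gen D G"
    using ideal_gen_generators[OF D G(1)] ideal_zero[OF GI] by simp
  then have "range (coeff s) \<subseteq> ideal_gen D G" by (rule order_trans[OF coeffs])
  then have "cont D s \<subseteq> J" unfolding cont_def G(3) by (rule ideal_gen_least[OF GI])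
  moreover have "J \<subseteq> cont D s"
  proof -
    have "G \<subseteq> cont D s" using gens coeff_in_cont[OF D, of s] by auto
    then show ?thesis unfolding G(3) by (rule ideal_gen_least[OF cont_ideal[OF D sD]])
  qed
  ultimately show ?thesis using sD by blast
qed

section \<open>Localizing systems\<close>

lemma locsys_ideal: "localizing_system D F \<Longrightarrow> I \<in> F \<Longrightarrow> ideal_of D I"
  unfolding localizing_system_def by blast

lemma locsys_up:
  "localizing_system D F \<Longrightarrow> A \<in> F \<Longrightarrow> ideal_of D B \<Longrightarrow> A \<subseteq> B \<Longrightarrow> B \<in> F"
  unfolding localizing_system_def by blast

lemma locsys_colon:
  "localizing_system D F \<Longrightarrow> A \<in> F \<Longrightarrow> ideal_of D B \<Longrightarrow> (\<forall>i\<in>A. colon_D D B i \<in> F) \<Longrightarrow> B \<in> F"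
  unfolding localizing_system_def by blast

lemma locsys_D: "subring_of D \<Longrightarrow> localizing_system D F \<Longrightarrow> D \<in> F"
  using locsys_up[of D F _ D] ideal_subset ideal_of_D
  by (metis localizing_system_def ex_in_conv)

lemma chain_Union_ideal:
  assumes C: "C \<noteq> {}" "subset.chain \<A> C" and ideals: "\<And>X. X \<in> C \<Longrightarrow> ideal_of D X"
  shows "ideal_of D (\<Union>C)"
proof (rule ideal_ofI)
  show "\<Union>C \<subseteq> D" using ideals ideal_subset by blast
  show "0 \<in> \<Union>C" using C(1) ideals ideal_zero by blast
next
  fix x y assume "x \<in> \<Union>C" "y \<in> \<Union>C"
  then obtain X Y where XY: "X \<in> C" "Y \<in> C" "x \<in> X" "y \<in> Y" by auto
  then have "X \<subseteq> Y \<or> Y \<subseteq> X" using C(2) by (auto simp: subset_chain_def)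
  then show "x + y \<in> \<Union>C" using XY ideals ideal_add by blast
next
  fix d x assume "d \<in> D" "x \<in> \<Union>C"
  then show "d * x \<in> \<Union>C" using ideals ideal_mult_left by blast
qed

text \<open>For a system of finite type, membership of a chain union is witnessed by a member:
  a finitely generated ideal below the union has its generators in one chain element.\<close>
lemma finite_type_chain:
  assumes D: "subring_of D" and F: "loc_sys_finite_type D F"
    and C: "C \<noteq> {}" "subset.chain \<A> C" and ideals: "\<And>X. X \<in> C \<Longrightarrow> ideal_of D X"
    and U: "\<Union>C \<in> F"
  shows "\<exists>B\<in>C. B \<in> F"
proof -
  obtain J where J: "J \<in> F" "J \<subseteq> \<Union>C" "finitely_generated_ideal D J"
    using F U unfolding loc_sys_finite_type_def by blast
  then obtain G where G: "finite G" "G \<subseteq> D" "J = ideal_gen D G"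
    unfolding finitely_generated_ideal_def by blast
  have "G \<subseteq> \<Union>C" using ideal_gen_generators[OF D G(1)] G(3) J(2) by blast
  then obtain B where B: "B \<in> C" "G \<subseteq> B" using finite_subset_Union_chain[OF G(1) _ C] by blast
  have "J \<subseteq> B" using ideal_gen_least[OF ideals[OF B(1)] B(2)] G(3) by simp
  then show ?thesis
    using locsys_up[OF _ J(1) ideals[OF B(1)]] F B(1) by (auto simp: loc_sys_finite_type_def)
qed

text \<open>The ideal M + aD, used to show that maximal ideals outside F are prime.\<close>
definition adjoin :: "'k::field set \<Rightarrow> 'k set \<Rightarrow> 'k \<Rightarrow> 'k set" where
  "adjoin D M a = {m + a * d | m d. m \<in> M \<and> d \<in> D}"

lemma adjoin_ideal:
  assumes D: "subring_of D" and M: "ideal_of D M" and a: "a \<in> D"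
  shows "ideal_of D (adjoin D M a)"
proof (rule ideal_ofI)
  show "adjoin D M a \<subseteq> D"
    using a D ideal_subset[OF M] unfolding adjoin_def subring_of_def by blast
  have "0 = 0 + a * 0" by simp
  then show "0 \<in> adjoin D M a" using ideal_zero[OF M] D unfolding adjoin_def subring_of_def by blast
next
  fix x y assume "x \<in> adjoin D M a" "y \<in> adjoin D M a"
  then obtain m d m' d' where "x = m + a * d" "y = m' + a * d'" "m \<in> M" "d \<in> D" "m' \<in> M" "d' \<in> D"
    unfolding adjoin_def by blast
  moreover have "x + y = (m + m') + a * (d + d')" using calculation by (simp add: algebra_simps)
  ultimately show "x + y \<in> adjoin D M a"
    using ideal_add[OF M] D unfolding adjoin_def subring_of_def by blast
next
  fix e x assume e: "e \<in> D" "x \<in> adjoin D M a"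
  then obtain m d where "x = m + a * d" "m \<in> M" "d \<in> D" unfolding adjoin_def by blast
  moreover have "e * x = e * m + a * (e * d)" using calculation by (simp add: algebra_simps)
  ultimately show "e * x \<in> adjoin D M a"
    using ideal_mult_left[OF M] D e unfolding adjoin_def subring_of_def by blast
qed

lemma adjoin_superset: "subring_of D \<Longrightarrow> M \<subseteq> adjoin D M a"
  unfolding adjoin_def subring_of_def by force

lemma adjoin_element: "subring_of D \<Longrightarrow> ideal_of D M \<Longrightarrow> a \<in> adjoin D M a"
  unfolding adjoin_def subring_of_def using ideal_zero by force

lemma adjoin_product:
  assumes D: "subring_of D" and M: "ideal_of D M" and ab: "a \<in> D" "b \<in> D" "a * b \<in> M"
    and i: "i \<in> adjoin D M a"
  shows "adjoin D M b \<subseteq> colon_D D M i"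
proof
  obtain m d where i_eq: "i = m + a * d" and m: "m \<in> M" and d: "d \<in> D"
    using i unfolding adjoin_def by blast
  have iD: "i \<in> D" using adjoin_ideal[OF D M ab(1)] i ideal_subset by blast
  fix x assume x: "x \<in> adjoin D M b"
  then obtain m' d' where x_eq: "x = m' + b * d'" and m': "m' \<in> M" and d': "d' \<in> D"
    unfolding adjoin_def by blast
  have xD: "x \<in> D" using adjoin_ideal[OF D M ab(2)] x ideal_subset by blast
  have "b * d' \<in> D" "d * d' \<in> D" using ab(2) d d' D by (auto simp: subring_of_def)
  then have "m' * i \<in> M" "m * (b * d') \<in> M" "(a * b) * (d * d') \<in> M"
    using ideal_mult_right[OF M] iD m m' ab(3) by auto
  moreover have "x * i = m' * i + m * (b * d') + (a * b) * (d * d')"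
    using x_eq i_eq by (simp add: algebra_simps)
  ultimately have "x * i \<in> M" using ideal_add[OF M] by metis
  then show "x \<in> colon_D D M i" using xD by (simp add: colon_D_def)
qed

lemma maximal_outside_prime:
  assumes D: "subring_of D" and F: "localizing_system D F"
    and M: "ideal_of D M" "M \<notin> F"
    and max: "\<And>X. ideal_of D X \<Longrightarrow> M \<subseteq> X \<Longrightarrow> X \<notin> F \<Longrightarrow> X = M"
  shows "prime_ideal_of D M"
proof -
  have adjoin_in_F: "adjoin D M a \<in> F" if a: "a \<in> D" "a \<notin> M" for a
    using max[OF adjoin_ideal[OF D M(1) a(1)] adjoin_superset[OF D]]
      adjoin_element[OF D M(1), of a] a(2) by blast
  have "a \<in> M \<or> b \<in> M" if ab: "a \<in> D" "b \<in> D" "a * b \<in> M" for a b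
  proof (rule ccontr)
    assume "\<not> (a \<in> M \<or> b \<in> M)"
    then have "adjoin D M a \<in> F" "adjoin D M b \<in> F" using ab adjoin_in_F by auto
    then have "\<forall>i\<in>adjoin D M a. colon_D D M i \<in> F"
      using locsys_up[OF F _ colon_D_ideal[OF D ideal_submodule[OF M(1)]]]
        adjoin_product[OF D M(1) ab] by blast
    then show False using locsys_colon[OF F \<open>adjoin D M a \<in> F\<close> M(1)] M(2) by blast
  qed
  moreover have "M \<noteq> D" using M(2) locsys_D[OF D F] by auto
  ultimately show ?thesis using M(1) by (simp add: prime_ideal_of_def)
qed

lemma exists_prime_outside:
  assumes D: "subring_of D" and F: "loc_sys_finite_type D F" and I: "ideal_of D I" "I \<notin> F"
  shows "\<exists>Q. prime_ideal_of D Q \<and> I \<subseteq> Q \<and> Q \<notin> F"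
proof -
  have LF: "localizing_system D F" using F by (simp add: loc_sys_finite_type_def)
  define \<A> where "\<A> = {J. ideal_of D J \<and> I \<subseteq> J \<and> J \<notin> F}"
  have "\<exists>M\<in>\<A>. \<forall>X\<in>\<A>. M \<subseteq> X \<longrightarrow> X = M"
  proof (rule subset_Zorn_nonempty)
    show "\<A> \<noteq> {}" using I by (auto simp: \<A>_def)
  next
    fix C assume C: "C \<noteq> {}" "subset.chain \<A> C"
    then have ideals: "\<And>X. X \<in> C \<Longrightarrow> ideal_of D X" and outside: "\<And>X. X \<in> C \<Longrightarrow> X \<notin> F"
      and above: "\<And>X. X \<in> C \<Longrightarrow> I \<subseteq> X"
      by (auto simp: subset_chain_def \<A>_def)
    have "\<Union>C \<notin> F" using finite_type_chain[OF D F C ideals] outside by blast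
    then show "\<Union>C \<in> \<A>" using chain_Union_ideal[OF C ideals] above C(1) by (auto simp: \<A>_def)
  qed
  then obtain M where "M \<in> \<A>" and max: "\<And>X. X \<in> \<A> \<Longrightarrow> M \<subseteq> X \<Longrightarrow> X = M" by blast
  then have M: "ideal_of D M" "I \<subseteq> M" "M \<notin> F" by (auto simp: \<A>_def)
  have "X = M" if "ideal_of D X" "M \<subseteq> X" "X \<notin> F" for X
    using max[of X] that M(2) by (auto simp: \<A>_def)
  then have "prime_ideal_of D M" using maximal_outside_prime[OF D LF M(1,3)] by blast
  then show ?thesis using M by blast
qed

section \<open>The correspondence between systems and multiplicative sets\<close>

lemma S_of_iff:
  assumes D: "subring_of D" and F: "loc_sys_finite_type D F"
  shows "s \<in> S_of D F \<longleftrightarrow> s \<in> polys_over D \<and> cont D s \<in> F"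
proof -
  have LF: "localizing_system D F" using F by (simp add: loc_sys_finite_type_def)
  have "s \<notin> S_of D F" if s: "s \<in> polys_over D" "cont D s \<notin> F"
  proof -
    obtain Q where Q: "prime_ideal_of D Q" "cont D s \<subseteq> Q" "Q \<notin> F"
      using exists_prime_outside[OF D F cont_ideal[OF D s(1)] s(2)] by blast
    then have "s \<in> polys_over Q" using cont_subset_iff[OF D] by (simp add: prime_ideal_of_def)
    then show ?thesis using Q unfolding S_of_def Spec_def by blast
  qed
  moreover have "s \<in> S_of D F" if s: "s \<in> polys_over D" "cont D s \<in> F"
  proof -
    have "s \<notin> polys_over Q" if "Q \<in> Spec D" "Q \<notin> F" for Q
    proof
      assume "s \<in> polys_over Q"
      moreover have QI: "ideal_of D Q" using that by (simp add: Spec_def prime_ideal_of_def)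
      ultimately have "cont D s \<subseteq> Q" using cont_subset_iff[OF D] by blast
      then show False using locsys_up[OF LF s(2) QI] that by blast
    qed
    then show ?thesis using s(1) unfolding S_of_def by blast
  qed
  ultimately show ?thesis by (auto simp: S_of_def)
qed

definition F_of :: "'k::field set \<Rightarrow> 'k poly set \<Rightarrow> 'k set set" where
  "F_of D S = {I. ideal_of D I \<and> (\<exists>s\<in>S. cont D s \<subseteq> I)}"

lemma F_of_S_of:
  assumes D: "subring_of D" and F: "loc_sys_finite_type D F"
  shows "F_of D (S_of D F) = F"
proof (intro set_eqI iffI)
  have LF: "localizing_system D F" using F by (simp add: loc_sys_finite_type_def)
  fix I
  show "I \<in> F" if "I \<in> F_of D (S_of D F)"
    using that S_of_iff[OF D F] locsys_up[OF LF] by (auto simp: F_of_def)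
  show "I \<in> F_of D (S_of D F)" if I: "I \<in> F"
  proof -
    obtain J where J: "J \<in> F" "J \<subseteq> I" "finitely_generated_ideal D J"
      using F I unfolding loc_sys_finite_type_def by blast
    obtain s where "s \<in> polys_over D" "cont D s = J"
      using finitely_generated_is_cont[OF D J(3)] by blast
    then show ?thesis
      using J S_of_iff[OF D F] locsys_ideal[OF LF I] by (auto simp: F_of_def)
  qed
qed

text \<open>For any S \<subseteq> D[X], the set S(F_of S) is the extended saturation
  of S: a prime P belongs to F_of S exactly when P[X] meets S.\<close>
lemma S_of_F_of:
  assumes D: "subring_of D" and S: "S \<subseteq> polys_over D"
  shows "S_of D (F_of D S) = ext_saturation D S"
proof -
  have "P \<in> F_of D S \<longleftrightarrow> polys_over P \<inter> S \<noteq> {}" if "P \<in> Spec D" for P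
  proof -
    have "ideal_of D P" using that by (simp add: Spec_def prime_ideal_of_def)
    then show ?thesis using cont_subset_iff[OF D] S by (auto simp: F_of_def)
  qed
  then have "{polys_over Q | Q. Q \<in> Spec D \<and> Q \<notin> F_of D S}
      = {polys_over P | P. P \<in> Spec D \<and> polys_over P \<inter> S = {}}" by blast
  then show ?thesis by (simp add: S_of_def ext_saturation_def)
qed

text \<open>S(F) is multiplicative: 1 lies in no Q[X], 0 would force {0} into F, and
  Q[X] is prime for the primes Q outside F.\<close>
lemma S_of_mult_subset:
  assumes D: "subring_of D" and F: "loc_sys_finite_type D F"
  shows "mult_subset D (S_of D F)"
proof -
  have LF: "localizing_system D F" using F by (simp add: loc_sys_finite_type_def)
  have "1 \<notin> polys_over Q" if "Q \<in> Spec D" for Q :: "'a set"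
    using one_notin_prime[of D Q] that by (auto simp: Spec_def polys_over_def dest: spec[of _ 0])
  then have "1 \<in> S_of D F" using one_polys_over[OF D] by (auto simp: S_of_def)
  moreover have "0 \<notin> S_of D F"
  proof
    assume "0 \<in> S_of D F"
    then have "cont D 0 \<in> F" using S_of_iff[OF D F] by blast
    moreover have "ideal_of D {0}" using D by (simp add: ideal_of_def submodule_of_def subring_of_def)
    moreover have "cont D 0 \<subseteq> {0}"
      using cont_subset_iff[OF D calculation(2)] by (simp add: polys_over_def)
    ultimately have "{0} \<in> F" using locsys_up[OF LF] by blast
    then show False using LF by (simp add: localizing_system_def)
  qed
  moreover have "s * t \<in> S_of D F" if "s \<in> S_of D F" "t \<in> S_of D F" for s t
  proof -
    have sD: "s \<in> polys_over D" and tD: "t \<in> polys_over D" using that by (auto simp: S_of_def)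
    have "s * t \<in> polys_over D" using polys_over_mult[OF ideal_submodule[OF ideal_of_D[OF D]] sD tD] .
    moreover have "s * t \<notin> polys_over Q" if "Q \<in> Spec D" "Q \<notin> F" for Q
      using prime_polys_over[OF D _ sD tD] \<open>s \<in> S_of D F\<close> \<open>t \<in> S_of D F\<close> that
      by (auto simp: Spec_def S_of_def)
    ultimately show ?thesis by (auto simp: S_of_def)
  qed
  ultimately show ?thesis by (auto simp: mult_subset_def S_of_def)
qed

text \<open>S(F) is extended saturated, since S(F) = S(F_of (S(F))) = S(F)^#.\<close>
lemma S_of_ext_saturated:
  assumes D: "subring_of D" and F: "loc_sys_finite_type D F"
  shows "ext_saturated D (S_of D F)"
proof -
  have "S_of D F \<subseteq> polys_over D" by (auto simp: S_of_def)
  then have "ext_saturation D (S_of D F) = S_of D (F_of D (S_of D F))" by (simp add: S_of_F_of[OF D])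
  then show ?thesis by (simp add: ext_saturated_def F_of_S_of[OF D F])
qed

text \<open>If t_k s_k lies in J[X] for every coefficient s_k of s, then so does s times the
  product of the t_k: in each coefficient of the product, s_k meets its own factor t_k.\<close>
lemma mult_prod_in_colon:
  assumes D: "subring_of D" and J: "ideal_of D J"
    and tD: "\<And>k. t k \<in> polys_over D" and t: "\<And>k. t k \<in> polys_over (colon_D D J (coeff s k))"
  shows "s * (\<Prod>k\<le>degree s. t k) \<in> polys_over J"
proof -
  let ?T = "\<Prod>k\<le>degree s. t k"
  have colon: "ideal_of D (colon_D D J c)" for c using colon_D_ideal[OF D ideal_submodule[OF J]] .
  have T_coeff: "coeff s i * coeff ?T m \<in> J" if i: "i \<le> degree s" for i m
  proof -
    have "?T = t i * (\<Prod>k\<in>{..degree s}-{i}. t k)" using i by (subst prod.remove[of _ i]) auto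
    moreover have "(\<Prod>k\<in>{..degree s}-{i}. t k) \<in> polys_over D" by (rule prod_polys_over[OF D tD])
    ultimately have "?T \<in> polys_over (colon_D D J (coeff s i))"
      using polys_over_mult[OF ideal_submodule[OF colon] t] by simp
    then show ?thesis by (simp add: polys_over_def colon_D_def mult.commute)
  qed
  have "coeff s i * coeff ?T (n - i) \<in> J" for n i
    using T_coeff ideal_zero[OF J] by (cases "i \<le> degree s") (auto simp: coeff_eq_0)
  then have "coeff (s * ?T) n \<in> J" for n
    unfolding coeff_mult by (intro submodule_sum[OF ideal_submodule[OF J]])
  then show ?thesis by (simp add: polys_over_def)
qed

lemma prod_mult_subset:
  assumes S: "mult_subset D S" and t: "\<And>k. k \<in> A \<Longrightarrow> t k \<in> S"
  shows "prod t A \<in> S"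
  using t
proof (induction A rule: infinite_finite_induct)
  case (insert x A) then show ?case using S by (simp add: mult_subset_def)
qed (use S in \<open>simp_all add: mult_subset_def\<close>)

text \<open>The second axiom of localizing systems for F_of S: if c(s) lies in I and
  each conductor (J : s_k) contains a content c(t_k), then J contains the content of
  the element s t_0 ... t_n of S.\<close>
lemma F_of_colon_closed:
  assumes D: "subring_of D" and S: "mult_subset D S"
    and I: "I \<in> F_of D S" and J: "ideal_of D J" and colon: "\<forall>i\<in>I. colon_D D J i \<in> F_of D S"
  shows "J \<in> F_of D S"
proof -
  have SD: "S \<subseteq> polys_over D" using S by (simp add: mult_subset_def)
  obtain s where s: "s \<in> S" "cont D s \<subseteq> I" using I unfolding F_of_def by blast
  have "\<exists>t. t \<in> S \<and> cont D t \<subseteq> colon_D D J (coeff s k)" for k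
  proof -
    have "coeff s k \<in> I" using s(2) coeff_in_cont[OF D, of s k] by blast
    then have "colon_D D J (coeff s k) \<in> F_of D S" using colon by blast
    then show ?thesis unfolding F_of_def by blast
  qed
  then obtain t where t: "\<And>k. t k \<in> S" "\<And>k. cont D (t k) \<subseteq> colon_D D J (coeff s k)"
    using choice[of "\<lambda>k t. t \<in> S \<and> cont D t \<subseteq> colon_D D J (coeff s k)"] by blast
  have tD: "\<And>k. t k \<in> polys_over D" using t(1) SD by blast
  have t_colon: "t k \<in> polys_over (colon_D D J (coeff s k))" for k
    using t(2)[of k] cont_subset_iff[OF D colon_D_ideal[OF D ideal_submodule[OF J]], of "t k"]
    by simp
  have "(\<Prod>k\<le>degree s. t k) \<in> S" by (rule prod_mult_subset[OF S t(1)])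
  then have "s * (\<Prod>k\<le>degree s. t k) \<in> S" using S s(1) by (simp add: mult_subset_def)
  moreover have "cont D (s * (\<Prod>k\<le>degree s. t k)) \<subseteq> J"
    using mult_prod_in_colon[OF D J tD t_colon] cont_subset_iff[OF D J] by simp
  ultimately show ?thesis using J by (auto simp: F_of_def)
qed

lemma F_of_finite_type:
  assumes D: "subring_of D" and S: "mult_subset D S"
  shows "loc_sys_finite_type D (F_of D S)"
proof -
  have SD: "S \<subseteq> polys_over D" and one: "1 \<in> S" and zero: "0 \<notin> S"
    using S by (auto simp: mult_subset_def)
  have "D \<in> F_of D S"
    using ideal_of_D[OF D] one ideal_subset[OF cont_ideal[OF D one_polys_over[OF D]]]
    by (auto simp: F_of_def)
  moreover have "{0} \<notin> F_of D S"
  proof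
    assume "{0} \<in> F_of D S"
    then obtain s where s: "s \<in> S" "cont D s \<subseteq> {0}" unfolding F_of_def by blast
    then have "s = 0" using coeff_in_cont[OF D, of s] by (intro poly_eqI) auto
    then show False using s zero by simp
  qed
  moreover have "\<exists>J\<in>F_of D S. J \<subseteq> I \<and> finitely_generated_ideal D J" if I: "I \<in> F_of D S" for I
  proof -
    obtain s where "s \<in> S" "cont D s \<subseteq> I" using I unfolding F_of_def by blast
    then show ?thesis using SD cont_ideal[OF D, of s] cont_finitely_generated[of s D]
      by (intro bexI[of _ "cont D s"]) (auto simp: F_of_def)
  qed
  moreover have "\<forall>I\<in>F_of D S. ideal_of D I" by (simp add: F_of_def)
  moreover have "\<forall>I\<in>F_of D S. \<forall>J. ideal_of D J \<and> I \<subseteq> J \<longrightarrow> J \<in> F_of D S"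
    by (auto simp: F_of_def)
  moreover have "\<forall>I\<in>F_of D S. \<forall>J. ideal_of D J \<and> (\<forall>i\<in>I. colon_D D J i \<in> F_of D S) \<longrightarrow> J \<in> F_of D S"
    using F_of_colon_closed[OF D S] by blast
  ultimately show ?thesis unfolding loc_sys_finite_type_def localizing_system_def by blast
qed

section \<open>The module E D[X]_S\<close>

lemma fract_sum_same_denom:
  assumes "s \<noteq> 0" shows "(\<Sum>k\<in>A. Fract (p k) s) = Fract (\<Sum>k\<in>A. p k) (s::'a::idom)"
proof (induction A rule: infinite_finite_induct)
  case (insert x F) then show ?case by (simp add: assms eq_fract algebra_simps)
qed (simp_all add: Zero_fract_def eq_fract assms)

lemma ext_module_sum_fract:
  fixes e :: "nat \<Rightarrow> 'k::field" and r :: "nat \<Rightarrow> 'k poly fract"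
  assumes D: "subring_of D" and S: "mult_subset D S" and E: "submodule_of D E"
  shows "(\<forall>i<n. e i \<in> E \<and> r i \<in> loc_ring D S) \<Longrightarrow>
    \<exists>h t. h \<in> polys_over E \<and> t \<in> S \<and> (\<Sum>i<n. Fract [:e i:] 1 * r i) = Fract h t"
proof (induction n)
  case 0
  have "(0::'k poly) \<in> polys_over E" using E by (simp add: polys_over_def submodule_of_def)
  then show ?case using S by (auto simp: Zero_fract_def mult_subset_def)
next
  case (Suc n)
  then obtain h t where h: "h \<in> polys_over E" and t: "t \<in> S"
    and sum_n: "(\<Sum>i<n. Fract [:e i:] 1 * r i) = Fract h t" by auto
  obtain f s where r: "r n = Fract f s" and f: "f \<in> polys_over D" and s: "s \<in> S"
    using Suc.prems unfolding loc_ring_def by blast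
  have SD: "S \<subseteq> polys_over D" and nonzero: "t \<noteq> 0" "s \<noteq> 0" and ts: "t * s \<in> S"
    using S t s by (auto simp: mult_subset_def)
  have en: "[:e n:] \<in> polys_over E" using const_polys_over[OF E] Suc.prems by blast
  have "h * s \<in> polys_over E" using polys_over_mult[OF E h] s SD by blast
  moreover have "[:e n:] * f * t \<in> polys_over E"
    using polys_over_mult[OF E polys_over_mult[OF E en f]] t SD by blast
  ultimately have num: "h * s + [:e n:] * f * t \<in> polys_over E" by (rule polys_over_add[OF E])
  have "(\<Sum>i<Suc n. Fract [:e i:] 1 * r i) = Fract h t + Fract ([:e n:] * f) s"
    using sum_n r by simp
  also have "\<dots> = Fract (h * s + [:e n:] * f * t) (t * s)" using nonzero by (simp add: algebra_simps)
  finally show ?case using num ts by blast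
qed

lemma ext_module_eq:
  fixes D :: "'k::field set"
  assumes D: "subring_of D" and S: "mult_subset D S" and E: "submodule_of D E"
  shows "ext_module D E S = {Fract h t | h t. h \<in> polys_over E \<and> t \<in> S}"
proof (intro set_eqI iffI)
  fix x assume "x \<in> ext_module D E S"
  then show "x \<in> {Fract h t | h t. h \<in> polys_over E \<and> t \<in> S}"
    unfolding ext_module_def using ext_module_sum_fract[OF D S E] by blast
next
  fix x assume "x \<in> {Fract h t | h t. h \<in> polys_over E \<and> t \<in> S}"
  then obtain h t where x: "x = Fract h t" and h: "h \<in> polys_over E" and t: "t \<in> S" by blast
  have "t \<noteq> 0" using S t by (auto simp: mult_subset_def)
  have summand: "Fract [:coeff h k:] 1 * Fract (monom 1 k) t = Fract (monom (coeff h k) k) t" for k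
    by (simp add: smult_monom)
  have "(\<Sum>k<Suc (degree h). Fract [:coeff h k:] 1 * Fract (monom 1 k) t)
      = (\<Sum>k\<le>degree h. Fract (monom (coeff h k) k) t)"
    by (simp only: summand lessThan_Suc_atMost)
  also have "\<dots> = Fract (\<Sum>k\<le>degree h. monom (coeff h k) k) t"
    using \<open>t \<noteq> 0\<close> by (rule fract_sum_same_denom)
  also have "\<dots> = x" by (simp add: x poly_as_sum_of_monoms)
  finally have x_sum: "x = (\<Sum>k<Suc (degree h). Fract [:coeff h k:] 1 * Fract (monom 1 k) t)" ..
  have "Fract (monom 1 k) t \<in> loc_ring D S" for k
    unfolding loc_ring_def using monom_polys_over[OF D] t by blast
  then have members: "\<forall>k<Suc (degree h). coeff h k \<in> E \<and> Fract (monom 1 k) t \<in> loc_ring D S"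
    using h by (simp add: polys_over_def)
  show "x \<in> ext_module D E S"
    unfolding ext_module_def mem_Collect_eq
    by (intro exI[of _ "Suc (degree h)"] exI[of _ "coeff h"] exI[of _ "\<lambda>k. Fract (monom 1 k) t"]
        conjI x_sum members)
qed

lemma const_in_ext_module_iff:
  assumes D: "subring_of D" and S: "mult_subset D S" and E: "submodule_of D E"
  shows "Fract [:z:] 1 \<in> ext_module D E S \<longleftrightarrow> (\<exists>t\<in>S. smult z t \<in> polys_over E)"
proof -
  have fract_iff: "Fract [:z:] 1 = Fract h t \<longleftrightarrow> h = smult z t" if "t \<in> S" for h t
  proof -
    have "t \<noteq> 0" using that S by (auto simp: mult_subset_def)
    then show ?thesis by (auto simp: eq_fract)
  qed
  show ?thesis unfolding ext_module_eq[OF D S E] mem_Collect_eq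
  proof
    assume "\<exists>h t. Fract [:z:] 1 = Fract h t \<and> h \<in> polys_over E \<and> t \<in> S"
    then obtain h t where "Fract [:z:] 1 = Fract h t" and h: "h \<in> polys_over E" and t: "t \<in> S"
      by blast
    then have "h = smult z t" using fract_iff[OF t] by simp
    then show "\<exists>t\<in>S. smult z t \<in> polys_over E" using h t by blast
  next
    assume "\<exists>t\<in>S. smult z t \<in> polys_over E"
    then show "\<exists>h t. Fract [:z:] 1 = Fract h t \<and> h \<in> polys_over E \<and> t \<in> S"
      using fract_iff by blast
  qed
qed

text \<open>Membership in E_F in the same terms: z c(t) \<subseteq> E for a content c(t) in F
  is the statement z t \<in> E[X], and the contents in F are those of the elements of S(F).\<close>
lemma E_loc_iff:
  assumes D: "subring_of D" and F: "loc_sys_finite_type D F" and E: "submodule_of D E"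
  shows "z \<in> E_loc F E \<longleftrightarrow> (\<exists>t\<in>S_of D F. smult z t \<in> polys_over E)"
proof
  assume "z \<in> E_loc F E"
  then obtain I where I: "I \<in> F" "z \<in> colon E I" unfolding E_loc_def by blast
  obtain t where t: "t \<in> S_of D F" "cont D t \<subseteq> I"
    using I(1) F_of_S_of[OF D F] by (auto simp: F_of_def)
  have "z * coeff t n \<in> E" for n
    using I(2) t(2) coeff_in_cont[OF D, of t n] unfolding colon_def by blast
  then have "smult z t \<in> polys_over E" by (simp add: polys_over_def)
  then show "\<exists>t\<in>S_of D F. smult z t \<in> polys_over E" using t(1) by blast
next
  assume "\<exists>t\<in>S_of D F. smult z t \<in> polys_over E"
  then obtain t where t: "t \<in> S_of D F" "smult z t \<in> polys_over E" by blast
  then have tD: "t \<in> polys_over D" and ct: "cont D t \<in> F" using S_of_iff[OF D F] by auto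
  have "t \<in> polys_over (colon_D D E z)"
    using tD t(2) by (auto simp: polys_over_def colon_D_def mult.commute)
  then have "cont D t \<subseteq> colon_D D E z" using cont_subset_iff[OF D colon_D_ideal[OF D E]] by blast
  then have "z \<in> colon E (cont D t)" by (auto simp: colon_def colon_D_def mult.commute)
  then show "z \<in> E_loc F E" unfolding E_loc_def using ct by blast
qed

lemma E_loc_eq:
  assumes D: "subring_of D" and F: "loc_sys_finite_type D F" and E: "submodule_of D E"
  shows "E_loc F E = inter_K (ext_module D E (S_of D F))"
  using E_loc_iff[OF D F E] const_in_ext_module_iff[OF D S_of_mult_subset[OF D F] E]
  by (auto simp: inter_K_def)

theorem corollary2p2:
  fixes D :: "'k::field set"
  assumes "subring_of D" and "quotient_field_of D"
  shows "bij_betw (S_of D) {F. loc_sys_finite_type D F}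
           {S. mult_subset D S \<and> ext_saturated D S} \<and>
         (\<forall>F E. loc_sys_finite_type D F \<and> Fbar D E \<longrightarrow>
           E_loc F E = inter_K (ext_module D E (S_of D F)))"
proof (intro conjI allI impI)
  show "bij_betw (S_of D) {F. loc_sys_finite_type D F} {S. mult_subset D S \<and> ext_saturated D S}"
  proof (rule bij_betw_byWitness[where f' = "F_of D"])
    show "\<forall>F\<in>{F. loc_sys_finite_type D F}. F_of D (S_of D F) = F"
      using F_of_S_of[OF assms(1)] by blast
    show "\<forall>S\<in>{S. mult_subset D S \<and> ext_saturated D S}. S_of D (F_of D S) = S"
      using S_of_F_of[OF assms(1)] by (auto simp: mult_subset_def ext_saturated_def)
    show "S_of D ` {F. loc_sys_finite_type D F} \<subseteq> {S. mult_subset D S \<and> ext_saturated D S}"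
      using S_of_mult_subset[OF assms(1)] S_of_ext_saturated[OF assms(1)] by blast
    show "F_of D ` {S. mult_subset D S \<and> ext_saturated D S} \<subseteq> {F. loc_sys_finite_type D F}"
      using F_of_finite_type[OF assms(1)] by blast
  qed
next
  fix F E assume "loc_sys_finite_type D F \<and> Fbar D E"
  then show "E_loc F E = inter_K (ext_module D E (S_of D F))"
    using E_loc_eq[OF assms(1)] by (auto simp: Fbar_def)
qed

end
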